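(* Let $n\ge2$, $d\ge1$, $r\ge3$ with $dr=n$. For every vertex $(a,x)$ of $Q_n(d,r)$ with $x\in\{0,\dots,r-1\}$, the distance between $(0_n,0)$ and $(a,x)$ in $Q_n(d,r)$ is $$\mathrm{dist}((0_n,0),(a,x))=\|a\|+\min\{\,r+x-2\,\mathrm{leap}_1(a,x),\; 2r-x-2\,\mathrm{leap}_2(a,x)\,\}.$$
   Context: $\mathbb{Z}_2^n=\{0,1\}^n$ with coordinatewise addition mod 2; $e_i$ is the $i$-th standard basis vector, subscripts read modulo $n$; $\|a\|$ is the Hamming weight. The recursive cube of rings $Q_n(d,r)$ (for $n\ge d$, $dr\equiv0\pmod n$) is the simple graph on $\mathbb{Z}_2^n\times\mathbb{Z}_r$ in which $(a,x)$ is adjacent to $(a+e_{i+dx},x)$ for $1\le i\le d$ and to $(a,x\pm1)$. Definition of the leaps (case $dr=n$): for $(a,x)$ with $x\in\{0,\dots,r-1\}$, let $L$ be the non-decreasing list obtained by sorting the multiset consisting of $0$, $x$, $r$, and the numbers $\lfloor (i-1)/d\rfloor$ for each $i\in\{1,\dots,n\}$ with $a_i=1$. Then $\mathrm{leap}_1(a,x)=0$ if $x=0$, and otherwise $\mathrm{leap}_1(a,x)$ is the maximum difference between two consecutive entries of $L$ that are both $\le x$; $\mathrm{leap}_2(a,x)$ is the maximum difference between two consecutive entries of $L$ that are both $\ge x$. *)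

theory Defs
  imports Main
begin

text \<open>A vector a in Z_2^n is represented by its support, a subset of {1..n}
  (a_i = 1 iff i is in the set). Adding e_j is symmetric difference with {j};
  the Hamming weight is the cardinality.\<close>

definition idx :: "nat \<Rightarrow> nat \<Rightarrow> nat" where
  "idx n j = (j + n - 1) mod n + 1"   \<comment> \<open>subscript j read modulo n, in {1..n}\<close>

definition qvertex :: "nat \<Rightarrow> nat \<Rightarrow> nat set \<times> nat \<Rightarrow> bool" where
  "qvertex n r v \<longleftrightarrow> fst v \<subseteq> {1..n} \<and> snd v < r"

definition qadj :: "nat \<Rightarrow> nat \<Rightarrow> nat \<Rightarrow> nat set \<times> nat \<Rightarrow> nat set \<times> nat \<Rightarrow> bool" where
  "qadj n d r u v \<longleftrightarrow> qvertex n r u \<and> qvertex n r v \<and>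
     ((snd v = snd u \<and> (\<exists>i\<in>{1..d}. fst v = fst u - {idx n (i + d * snd u)} \<union> ({idx n (i + d * snd u)} - fst u)))
      \<or> (fst v = fst u \<and> (snd v = (snd u + 1) mod r \<or> snd u = (snd v + 1) mod r)))"

fun qwalk :: "nat \<Rightarrow> nat \<Rightarrow> nat \<Rightarrow> nat \<Rightarrow> nat set \<times> nat \<Rightarrow> nat set \<times> nat \<Rightarrow> bool" where
  "qwalk n d r 0 u v \<longleftrightarrow> u = v \<and> qvertex n r u"
| "qwalk n d r (Suc k) u v \<longleftrightarrow> (\<exists>w. qadj n d r u w \<and> qwalk n d r k w v)"

definition qdist :: "nat \<Rightarrow> nat \<Rightarrow> nat \<Rightarrow> nat set \<times> nat \<Rightarrow> nat set \<times> nat \<Rightarrow> nat" where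
  "qdist n d r u v = (LEAST k. qwalk n d r k u v)"

definition leapL :: "nat \<Rightarrow> nat \<Rightarrow> nat set \<Rightarrow> nat \<Rightarrow> nat list" where
  "leapL d r a x = sort ([0, x, r] @ map (\<lambda>i. (i - 1) div d) (sorted_list_of_set a))"

definition leap1 :: "nat \<Rightarrow> nat \<Rightarrow> nat set \<Rightarrow> nat \<Rightarrow> nat" where
  "leap1 d r a x = (if x = 0 then 0 else
     (let L = leapL d r a x in
      Max {L ! (j+1) - L ! j | j. j + 1 < length L \<and> L ! j \<le> x \<and> L ! (j+1) \<le> x}))"

definition leap2 :: "nat \<Rightarrow> nat \<Rightarrow> nat set \<Rightarrow> nat \<Rightarrow> nat" where
  "leap2 d r a x = (let L = leapL d r a x in
      Max {L ! (j+1) - L ! j | j. j + 1 < length L \<and> x \<le> L ! j \<and> x \<le> L ! (j+1)})"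

end

theory Submission
  imports Defs
begin

text \<open>Coordinate i can only be flipped while standing at ring position (i - 1) div d. So a walk
  from (0, 0) to (a, x) flips every coordinate in a at least once, and its ring moves form a walk
  on the r-cycle from 0 to x through every position that carries a coordinate of a. The shortest
  such cycle walk leaves out one gap between consecutive visited positions, either below or
  above x, and the leaps are exactly the longest such gaps. Instead of analysing walks directly,
  the right-hand side is used as a potential: it vanishes at (0, 0), changes by at most one along
  every edge, and every other vertex has a neighbour on which it is one smaller. Hence it is the
  distance.\<close>

definition gap_free :: "nat set \<Rightarrow> nat \<Rightarrow> nat \<Rightarrow> bool" where
  "gap_free P t k \<longleftrightarrow> (\<forall>s\<in>P. s \<le> t \<or> t + k \<le> s)"

definition max_gap :: "nat set \<Rightarrow> nat \<Rightarrow> nat \<Rightarrow> nat" where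
  "max_gap P lo hi = Max {k. \<exists>t. lo \<le> t \<and> t + k \<le> hi \<and> gap_free P t k}"

lemma gap_free_0 [simp]: "gap_free P t 0"
  by (auto simp: gap_free_def)

lemma gap_free_shrink:
  "gap_free P t k \<Longrightarrow> t \<le> t' \<Longrightarrow> t' + k' \<le> t + k \<Longrightarrow> gap_free P t' k'"
  unfolding gap_free_def by auto

lemma gap_free_extend_right: "gap_free P t k \<Longrightarrow> t + k \<notin> P \<Longrightarrow> gap_free P t (Suc k)"
  unfolding gap_free_def by (metis add_Suc_right le_neq_implies_less Suc_leI)

lemma gap_free_extend_left:
  "gap_free P t k \<Longrightarrow> t \<notin> P \<Longrightarrow> 0 < t \<Longrightarrow> gap_free P (t - 1) (Suc k)"
  unfolding gap_free_def by (smt (verit) Suc_diff_1 add_Suc_shift le_antisym not_less_eq_eq)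

lemma gap_free_cong:
  assumes "P \<inter> {lo<..<hi} = Q \<inter> {lo<..<hi}" "lo \<le> t" "t + k \<le> hi"
  shows "gap_free P t k = gap_free Q t k"
proof -
  have "s \<in> P \<longleftrightarrow> s \<in> Q" if "t < s" "s < t + k" for s
  proof -
    have "s \<in> {lo<..<hi}" using that assms(2,3) by simp
    then show ?thesis using assms(1) by blast
  qed
  then show ?thesis unfolding gap_free_def by (meson not_le)
qed

lemma finite_gaps: "finite {k. \<exists>t. lo \<le> t \<and> t + k \<le> hi \<and> gap_free P t k}"
  by (rule finite_subset[of _ "{..hi}"]) auto

lemma max_gap_ge: "lo \<le> t \<Longrightarrow> t + k \<le> hi \<Longrightarrow> gap_free P t k \<Longrightarrow> k \<le> max_gap P lo hi"
  unfolding max_gap_def by (rule Max_ge[OF finite_gaps]) auto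

lemma max_gap_attained:
  assumes "lo \<le> hi"
  obtains t where "lo \<le> t" "t + max_gap P lo hi \<le> hi" "gap_free P t (max_gap P lo hi)"
proof -
  have "0 \<in> {k. \<exists>t. lo \<le> t \<and> t + k \<le> hi \<and> gap_free P t k}"
    using assms by auto
  then have "max_gap P lo hi \<in> {k. \<exists>t. lo \<le> t \<and> t + k \<le> hi \<and> gap_free P t k}"
    unfolding max_gap_def by (intro Max_in[OF finite_gaps]) blast
  then show ?thesis using that by blast
qed

lemma max_gap_le: "lo \<le> hi \<Longrightarrow> max_gap P lo hi + lo \<le> hi"
  by (rule max_gap_attained[of lo hi P]) auto

lemma max_gap_same [simp]: "max_gap P lo lo = 0"
  using max_gap_le[of lo lo P] by simp

lemma max_gap_pos: "lo < hi \<Longrightarrow> 1 \<le> max_gap P lo hi"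
  by (rule max_gap_ge[of lo lo]) (auto simp: gap_free_def)

lemma max_gap_empty: "lo \<le> hi \<Longrightarrow> max_gap {} lo hi = hi - lo"
  using max_gap_le[of lo hi "{}"] max_gap_ge[of lo lo "hi - lo" hi "{}"]
  by (auto simp: gap_free_def)

lemma max_gap_mono_hi:
  assumes "lo \<le> hi" "hi \<le> hi'" shows "max_gap P lo hi \<le> max_gap P lo hi'"
proof -
  obtain t where "lo \<le> t" "t + max_gap P lo hi \<le> hi" "gap_free P t (max_gap P lo hi)"
    using max_gap_attained[OF assms(1)] .
  then show ?thesis using assms(2) by (intro max_gap_ge) auto
qed

lemma max_gap_antimono_lo:
  assumes "lo \<le> lo'" "lo' \<le> hi" shows "max_gap P lo' hi \<le> max_gap P lo hi"
proof -
  obtain t where "lo' \<le> t" "t + max_gap P lo' hi \<le> hi" "gap_free P t (max_gap P lo' hi)"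
    using max_gap_attained[OF assms(2)] .
  then show ?thesis using assms(1) by (intro max_gap_ge) auto
qed

lemma max_gap_Suc_hi:
  assumes "lo \<le> hi" shows "max_gap P lo (Suc hi) \<le> max_gap P lo hi + 1"
proof -
  define k where "k = max_gap P lo (Suc hi)"
  obtain t where t: "lo \<le> t" "t + k \<le> Suc hi" "gap_free P t k"
    using max_gap_attained[of lo "Suc hi" P] assms unfolding k_def by auto
  show ?thesis
  proof (cases "k = 0")
    case False
    have "gap_free P t (k - 1)" by (rule gap_free_shrink[OF t(3)]) auto
    moreover have "t + (k - 1) \<le> hi" using t(2) False by linarith
    ultimately have "k - 1 \<le> max_gap P lo hi" using max_gap_ge[OF t(1)] by blast
    then show ?thesis unfolding k_def by linarith
  qed (simp add: k_def)
qed

lemma max_gap_Suc_lo: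
  assumes "Suc lo \<le> hi" shows "max_gap P lo hi \<le> max_gap P (Suc lo) hi + 1"
proof -
  define k where "k = max_gap P lo hi"
  obtain t where t: "lo \<le> t" "t + k \<le> hi" "gap_free P t k"
    using max_gap_attained[of lo hi P] assms unfolding k_def by auto
  show ?thesis
  proof (cases "Suc lo \<le> t \<or> k = 0")
    case True
    then show ?thesis using max_gap_ge[OF _ t(2,3)] unfolding k_def by fastforce
  next
    case False
    then have "gap_free P (Suc lo) (k - 1)" by (intro gap_free_shrink[OF t(3)]) (use t in auto)
    then have "k - 1 \<le> max_gap P (Suc lo) hi" by (rule max_gap_ge[rotated 2]) (use t False in auto)
    then show ?thesis unfolding k_def by linarith
  qed
qed

lemma max_gap_cong:
  assumes "P \<inter> {lo<..<hi} = Q \<inter> {lo<..<hi}"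
  shows "max_gap P lo hi = max_gap Q lo hi"
proof -
  have "{k. \<exists>t. lo \<le> t \<and> t + k \<le> hi \<and> gap_free P t k} =
        {k. \<exists>t. lo \<le> t \<and> t + k \<le> hi \<and> gap_free Q t k}"
    using gap_free_cong[OF assms] by blast
  then show ?thesis unfolding max_gap_def by simp
qed

lemma max_gap_insert_endpoint:
  "x = lo \<or> x = hi \<Longrightarrow> max_gap (insert x P) lo hi = max_gap P lo hi"
  by (rule max_gap_cong) auto

lemma gap_free_consecutive:
  fixes L :: "nat list"
  assumes "sorted L" "Suc j < length L"
  shows "gap_free (set L) (L ! j) (L ! Suc j - L ! j)"
  unfolding gap_free_def
proof
  fix s assume "s \<in> set L"
  then obtain i where i: "i < length L" "s = L ! i" by (auto simp: in_set_conv_nth)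
  have "L ! j \<le> L ! Suc j" using sorted_nth_mono[OF assms(1)] assms(2) by simp
  moreover have "i \<le> j \<or> Suc j \<le> i" by linarith
  ultimately show "s \<le> L ! j \<or> L ! j + (L ! Suc j - L ! j) \<le> s"
    using sorted_nth_mono[OF assms(1)] i assms(2) by fastforce
qed

lemma gap_free_within_consecutive:
  fixes L :: "nat list"
  assumes srt: "sorted L" and lo: "lo \<in> set L" and hi: "hi \<in> set L"
    and t: "lo \<le> t" "t < hi" and k: "t + k \<le> hi" "gap_free (set L) t k"
  obtains j where "Suc j < length L" "lo \<le> L ! j" "L ! Suc j \<le> hi" "k \<le> L ! Suc j - L ! j"
proof -
  define I where "I = {i. i < length L \<and> L ! i \<le> t}"
  obtain i0 where i0: "i0 < length L" "L ! i0 = lo" using lo by (auto simp: in_set_conv_nth)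
  obtain ih where ih: "ih < length L" "L ! ih = hi" using hi by (auto simp: in_set_conv_nth)
  have finI: "finite I" unfolding I_def by auto
  have i0I: "i0 \<in> I" using i0 t unfolding I_def by auto
  define j where "j = Max I"
  have jI: "j \<in> I" unfolding j_def using Max_in[OF finI] i0I by blast
  have "j < ih"
  proof (rule ccontr)
    assume "\<not> j < ih"
    then have "L ! ih \<le> L ! j" using sorted_nth_mono[OF srt] jI unfolding I_def by auto
    then show False using jI ih t unfolding I_def by auto
  qed
  then have j1: "Suc j < length L" using ih by auto
  have "Suc j \<notin> I" using Max_ge[OF finI] unfolding j_def by fastforce
  then have "t < L ! Suc j" using j1 unfolding I_def by auto
  then have "t + k \<le> L ! Suc j" using k(2) j1 unfolding gap_free_def by force
  moreover have "L ! j \<le> t" using jI unfolding I_def by auto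
  moreover have "L ! Suc j \<le> hi" using sorted_nth_mono[OF srt, of "Suc j" ih] \<open>j < ih\<close> ih by auto
  moreover have "lo \<le> L ! j" using sorted_nth_mono[OF srt, of i0 j] Max_ge[OF finI i0I] jI i0
    unfolding I_def j_def by auto
  ultimately show ?thesis using that j1 by auto
qed

lemma Max_consecutive_gaps_eq_max_gap:
  fixes L :: "nat list"
  assumes srt: "sorted L" and lo: "lo \<in> set L" and hi: "hi \<in> set L" and "lo < hi"
  shows "Max {L ! Suc j - L ! j | j. Suc j < length L \<and> lo \<le> L ! j \<and> L ! Suc j \<le> hi}
           = max_gap (set L) lo hi"
    (is "Max ?G = _")
proof (rule antisym)
  have fin: "finite ?G"
    by (rule finite_subset[of _ "(\<lambda>j. L ! Suc j - L ! j) ` {..<length L}"]) auto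
  obtain j where "Suc j < length L" "lo \<le> L ! j" "L ! Suc j \<le> hi"
    using gap_free_within_consecutive[OF srt lo hi order.refl \<open>lo < hi\<close>, of 0] \<open>lo < hi\<close> by auto
  then have ne: "?G \<noteq> {}" by blast
  show "Max ?G \<le> max_gap (set L) lo hi"
  proof (rule Max.boundedI[OF fin ne])
    fix g assume "g \<in> ?G"
    then obtain j where j: "g = L ! Suc j - L ! j" "Suc j < length L" "lo \<le> L ! j" "L ! Suc j \<le> hi"
      by blast
    have "L ! j \<le> L ! Suc j" using sorted_nth_mono[OF srt] j(2) by simp
    then show "g \<le> max_gap (set L) lo hi"
      using max_gap_ge[OF j(3) _ gap_free_consecutive[OF srt j(2)]] j by simp
  qed
  obtain t where t: "lo \<le> t" "t + max_gap (set L) lo hi \<le> hi" "gap_free (set L) t (max_gap (set L) lo hi)"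
    using max_gap_attained[of lo hi "set L"] \<open>lo < hi\<close> by auto
  have "t < hi" using t(2) max_gap_pos[OF \<open>lo < hi\<close>, of "set L"] by linarith
  then obtain j where "Suc j < length L" "lo \<le> L ! j" "L ! Suc j \<le> hi"
      "max_gap (set L) lo hi \<le> L ! Suc j - L ! j"
    using gap_free_within_consecutive[OF srt lo hi t(1) _ t(2,3)] by blast
  then show "max_gap (set L) lo hi \<le> Max ?G" using Max_ge[OF fin] by fastforce
qed

text \<open>Coordinate i is flipped by the edges at ring position (i - 1) div d.\<close>

definition blocks :: "nat \<Rightarrow> nat set \<Rightarrow> nat set" where
  "blocks d a = (\<lambda>i. (i - 1) div d) ` a"

lemma set_leapL:
  "finite a \<Longrightarrow> set (leapL d r a x) = insert 0 (insert x (insert r (blocks d a)))"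
  unfolding leapL_def blocks_def set_sort by auto

lemma leap1_eq_max_gap:
  assumes "finite a" "x < r"
  shows "leap1 d r a x = max_gap (blocks d a) 0 x"
proof (cases "x = 0")
  case False
  define L where "L = leapL d r a x"
  have srt: "sorted L" unfolding L_def leapL_def by (rule sorted_sort)
  have L: "set L = insert 0 (insert x (insert r (blocks d a)))"
    unfolding L_def using set_leapL[OF assms(1)] .
  have gaps_iff: "L ! j \<le> x \<and> L ! Suc j \<le> x \<longleftrightarrow> 0 \<le> L ! j \<and> L ! Suc j \<le> x" if "Suc j < length L" for j
    using sorted_nth_mono[OF srt, of j "Suc j"] that by auto
  have "leap1 d r a x = Max {L ! Suc j - L ! j | j. Suc j < length L \<and> 0 \<le> L ! j \<and> L ! Suc j \<le> x}"
    unfolding leap1_def if_not_P[OF False] L_def[symmetric] Let_def Suc_eq_plus1[symmetric]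
    by (intro arg_cong[where f = Max] Collect_cong ex_cong1) (use gaps_iff in blast)
  also have "\<dots> = max_gap (set L) 0 x"
    using False L by (intro Max_consecutive_gaps_eq_max_gap[OF srt]) auto
  also have "\<dots> = max_gap (blocks d a) 0 x"
    unfolding L using assms(2) by (intro max_gap_cong) auto
  finally show ?thesis .
qed (simp add: leap1_def)

lemma leap2_eq_max_gap:
  assumes "finite a" "blocks d a \<subseteq> {..<r}" "x < r"
  shows "leap2 d r a x = max_gap (blocks d a) x r"
proof -
  define L where "L = leapL d r a x"
  have srt: "sorted L" unfolding L_def leapL_def by (rule sorted_sort)
  have L: "set L = insert 0 (insert x (insert r (blocks d a)))"
    unfolding L_def using set_leapL[OF assms(1)] .
  have gaps_iff: "x \<le> L ! j \<and> x \<le> L ! Suc j \<longleftrightarrow> x \<le> L ! j \<and> L ! Suc j \<le> r" if "Suc j < length L" for j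
  proof -
    have "L ! Suc j \<in> set L" using that by simp
    then have "L ! Suc j \<le> r" using L assms(2,3) by auto
    then show ?thesis using sorted_nth_mono[OF srt, of j "Suc j"] that by auto
  qed
  have "leap2 d r a x = Max {L ! Suc j - L ! j | j. Suc j < length L \<and> x \<le> L ! j \<and> L ! Suc j \<le> r}"
    unfolding leap2_def L_def[symmetric] Let_def Suc_eq_plus1[symmetric]
    by (intro arg_cong[where f = Max] Collect_cong ex_cong1) (use gaps_iff in blast)
  also have "\<dots> = max_gap (set L) x r"
    using L assms(3) by (intro Max_consecutive_gaps_eq_max_gap[OF srt]) auto
  also have "\<dots> = max_gap (blocks d a) x r"
    unfolding L by (intro max_gap_cong) auto
  finally show ?thesis .
qed

text \<open>A shortest walk on the r-cycle from 0 to x visiting all of P skips one gap (t, t + k).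
  Walking 0 \<rightarrow> t \<rightarrow> 0 \<rightarrow> t + k \<rightarrow> x (backwards around through r) costs r + x - 2k when the gap
  lies below x; walking 0 \<rightarrow> t + k \<rightarrow> 0 \<rightarrow> t \<rightarrow> x costs 2r - x - 2k when it lies above x.\<close>

definition tour_gap_below :: "nat \<Rightarrow> nat set \<Rightarrow> nat \<Rightarrow> int" where
  "tour_gap_below r P x = int r + int x - 2 * int (max_gap P 0 x)"

definition tour_gap_above :: "nat \<Rightarrow> nat set \<Rightarrow> nat \<Rightarrow> int" where
  "tour_gap_above r P x = 2 * int r - int x - 2 * int (max_gap P x r)"

definition ring_tour :: "nat \<Rightarrow> nat set \<Rightarrow> nat \<Rightarrow> int" where
  "ring_tour r P x = min (tour_gap_below r P x) (tour_gap_above r P x)"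

lemma ring_tour_nonneg: "x \<le> r \<Longrightarrow> 0 \<le> ring_tour r P x"
  using max_gap_le[of 0 x P] max_gap_le[of x r P]
  unfolding ring_tour_def tour_gap_below_def tour_gap_above_def by simp

lemma ring_tour_empty_start: "ring_tour r {} 0 = 0"
  unfolding ring_tour_def tour_gap_below_def tour_gap_above_def by (simp add: max_gap_empty)

lemma ring_tour_insert_self: "ring_tour r (insert x P) x = ring_tour r P x"
  unfolding ring_tour_def tour_gap_below_def tour_gap_above_def by (simp add: max_gap_insert_endpoint)

lemma ring_tour_Suc:
  assumes "Suc x < r" shows "\<bar>ring_tour r P (Suc x) - ring_tour r P x\<bar> \<le> 1"
  using max_gap_mono_hi[of 0 x "Suc x" P] max_gap_Suc_hi[of 0 x P]
    max_gap_antimono_lo[of x "Suc x" r P] max_gap_Suc_lo[of x r P] assms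
  unfolding ring_tour_def tour_gap_below_def tour_gap_above_def by auto

lemma ring_tour_wrap:
  assumes "2 \<le> r" shows "\<bar>ring_tour r P 0 - ring_tour r P (r - 1)\<bar> \<le> 1"
proof -
  have "max_gap P (r - 1) r = 1"
    using max_gap_pos[of "r - 1" r P] max_gap_le[of "r - 1" r P] assms by simp
  moreover have "max_gap P 0 (r - 1) \<le> max_gap P 0 r" "max_gap P 0 r \<le> max_gap P 0 (r - 1) + 1"
    using max_gap_mono_hi[of 0 "r - 1" r P] max_gap_Suc_hi[of 0 "r - 1" P] assms by simp_all
  ultimately show ?thesis using assms
    unfolding ring_tour_def tour_gap_below_def tour_gap_above_def by auto
qed

lemma ring_tour_step:
  assumes "x < r" "2 \<le> r"
  shows "\<bar>ring_tour r P ((x + 1) mod r) - ring_tour r P x\<bar> \<le> 1"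
proof (cases "Suc x < r")
  case True
  then show ?thesis using ring_tour_Suc[OF True] by simp
next
  case False
  then have "x = r - 1" using assms by auto
  then show ?thesis using ring_tour_wrap[OF assms(2), of P] assms by (simp add: abs_minus_commute)
qed

lemma ring_tour_neighbour:
  assumes "x < r" "y < r" "2 \<le> r" "y = (x + 1) mod r \<or> x = (y + 1) mod r"
  shows "\<bar>ring_tour r P y - ring_tour r P x\<bar> \<le> 1"
  using assms ring_tour_step[OF assms(1,3), of P] ring_tour_step[OF assms(2,3), of P]
  by (auto simp: abs_minus_commute)

lemma tour_gap_below_descent:
  assumes "x < r" "2 \<le> r" "x \<notin> P"
  obtains y where "y < r" "y = (x + 1) mod r \<or> x = (y + 1) mod r"
    "ring_tour r P y \<le> tour_gap_below r P x - 1"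
proof -
  define k where "k = max_gap P 0 x"
  obtain t where t: "t + k \<le> x" "gap_free P t k"
    using max_gap_attained[of 0 x P] unfolding k_def by auto
  consider "t + k < x" | "t + k = x" "x + 1 < r" | "t + k = x" "x + 1 = r"
    using t assms(1) by linarith
  then show ?thesis
  proof cases
    case 1
    then have "k \<le> max_gap P 0 (x - 1)" using max_gap_ge[OF _ _ t(2)] by simp
    then have "tour_gap_below r P (x - 1) \<le> tour_gap_below r P x - 1"
      using 1 unfolding tour_gap_below_def k_def by auto
    then show ?thesis using 1 assms(1) that[of "x - 1"] unfolding ring_tour_def by auto
  next
    case 2
    have "gap_free P t (Suc k)" using gap_free_extend_right[OF t(2)] 2 assms(3) by simp
    then have "Suc k \<le> max_gap P 0 (x + 1)" using max_gap_ge[of 0 t] 2 by simp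
    then have "tour_gap_below r P (x + 1) \<le> tour_gap_below r P x - 1"
      unfolding tour_gap_below_def k_def by auto
    then show ?thesis using 2 that[of "x + 1"] unfolding ring_tour_def by auto
  next
    case 3
    have "gap_free P t (Suc k)" using gap_free_extend_right[OF t(2)] 3 assms(3) by simp
    then have "Suc k \<le> max_gap P 0 r" using max_gap_ge[of 0 t] 3 by simp
    then have "tour_gap_above r P 0 \<le> tour_gap_below r P x - 1"
      using 3 unfolding tour_gap_below_def tour_gap_above_def k_def by auto
    then show ?thesis using 3 assms(2) that[of 0] unfolding ring_tour_def by auto
  qed
qed

lemma tour_gap_above_descent:
  assumes "x < r" "2 \<le> r" "x \<notin> P" "P \<subseteq> {..<r}" "P \<noteq> {} \<or> x \<noteq> 0"
  obtains y where "y < r" "y = (x + 1) mod r \<or> x = (y + 1) mod r"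
    "ring_tour r P y \<le> tour_gap_above r P x - 1"
proof -
  define k where "k = max_gap P x r"
  obtain t where t: "x \<le> t" "t + k \<le> r" "gap_free P t k"
    using max_gap_attained[of x r P] assms(1) unfolding k_def by auto
  have "1 \<le> k" unfolding k_def using max_gap_pos[OF assms(1)] .
  consider "x < t" | "t = x" "0 < x" | "t = x" "x = 0"
    using t by linarith
  then show ?thesis
  proof cases
    case 1
    then have "k \<le> max_gap P (x + 1) r" using max_gap_ge[OF _ t(2,3)] by simp
    then have "tour_gap_above r P (x + 1) \<le> tour_gap_above r P x - 1"
      unfolding tour_gap_above_def k_def by auto
    moreover have "x + 1 < r" using 1 t \<open>1 \<le> k\<close> by auto
    ultimately show ?thesis using that[of "x + 1"] unfolding ring_tour_def by auto
  next
    case 2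
    have "gap_free P (x - 1) (Suc k)" using gap_free_extend_left[OF t(3)] 2 assms(3) by simp
    then have "Suc k \<le> max_gap P (x - 1) r" using max_gap_ge[of "x - 1" "x - 1"] 2 t by simp
    then have "tour_gap_above r P (x - 1) \<le> tour_gap_above r P x - 1"
      using 2 unfolding tour_gap_above_def k_def by auto
    then show ?thesis using 2 assms(1) that[of "x - 1"] unfolding ring_tour_def by auto
  next
    case 3
    have "k \<noteq> r"
    proof
      assume "k = r"
      then have "\<forall>s\<in>P. s = 0 \<or> r \<le> s" using t 3 unfolding gap_free_def by simp
      then have "P = {}" using assms(3,4) 3 by (force simp: subset_eq)
      then show False using assms(5) 3 by simp
    qed
    then have "k \<le> max_gap P 0 (r - 1)" using max_gap_ge[OF _ _ t(3)] 3 t by simp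
    then have "tour_gap_below r P (r - 1) \<le> tour_gap_above r P x - 1"
      using 3 assms(2) unfolding tour_gap_below_def tour_gap_above_def k_def by auto
    then show ?thesis using 3 assms(2) that[of "r - 1"] unfolding ring_tour_def by auto
  qed
qed

lemma ring_tour_descent:
  assumes "x < r" "2 \<le> r" "x \<notin> P" "P \<subseteq> {..<r}" "P \<noteq> {} \<or> x \<noteq> 0"
  obtains y where "y < r" "y = (x + 1) mod r \<or> x = (y + 1) mod r"
    "ring_tour r P y = ring_tour r P x - 1"
proof -
  have "ring_tour r P x = tour_gap_below r P x \<or> ring_tour r P x = tour_gap_above r P x"
    unfolding ring_tour_def by linarith
  then obtain y where y: "y < r" "y = (x + 1) mod r \<or> x = (y + 1) mod r"
    "ring_tour r P y \<le> ring_tour r P x - 1"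
    using tour_gap_below_descent[OF assms(1-3)] tour_gap_above_descent[OF assms] by metis
  moreover have "\<bar>ring_tour r P y - ring_tour r P x\<bar> \<le> 1"
    using ring_tour_neighbour[OF assms(1) y(1) assms(2) y(2)] .
  ultimately show ?thesis using that by fastforce
qed

lemma idx_eq_self: "1 \<le> j \<Longrightarrow> j \<le> n \<Longrightarrow> idx n j = j"
  unfolding idx_def by (simp add: le_mod_geq less_imp_diff_less)

lemma blocks_subset:
  assumes "a \<subseteq> {1..n}" "d * r = n" "1 \<le> d"
  shows "blocks d a \<subseteq> {..<r}"
proof
  fix y assume "y \<in> blocks d a"
  then obtain i where i: "i \<in> a" "y = (i - 1) div d" unfolding blocks_def by auto
  have "i \<in> {1..n}" using assms(1) i(1) by blast
  then have "i - 1 < r * d" using assms(2) by (auto simp: mult.commute)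
  then show "y \<in> {..<r}" using i less_mult_imp_div_less by auto
qed

lemma flip_coordinate:
  fixes i d x :: nat
  assumes "1 \<le> i" "i \<le> d" "x < r" "d * r = n"
  shows "idx n (i + d * x) = i + d * x" "(i + d * x - 1) div d = x"
proof -
  have "d * Suc x \<le> d * r" using assms(3) by (intro mult_le_mono2) simp
  then show "idx n (i + d * x) = i + d * x" using assms by (intro idx_eq_self) auto
  have "i + d * x - 1 = (i - 1) + d * x" using assms(1) by linarith
  moreover have "((i - 1) + d * x) div d = x + (i - 1) div d" using assms(1,2) by (intro div_mult_self2) simp
  moreover have "(i - 1) div d = 0" using assms(1,2) by simp
  ultimately show "(i + d * x - 1) div d = x" by simp
qed

lemma ring_tour_flip:
  assumes "(c - 1) div d = x"
  shows "ring_tour r (blocks d (A - {c} \<union> ({c} - A))) x = ring_tour r (blocks d A) x"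
proof -
  have "insert x (blocks d (A - {c} \<union> ({c} - A))) = insert x (blocks d A)"
    using assms unfolding blocks_def by auto
  then show ?thesis by (metis ring_tour_insert_self)
qed

definition potential :: "nat \<Rightarrow> nat \<Rightarrow> nat set \<times> nat \<Rightarrow> int" where
  "potential d r v = int (card (fst v)) + ring_tour r (blocks d (fst v)) (snd v)"

lemma potential_start: "potential d r ({}, 0) = 0"
  unfolding potential_def blocks_def by (simp add: ring_tour_empty_start)

lemma potential_nonneg: "qvertex n r v \<Longrightarrow> 0 \<le> potential d r v"
  unfolding potential_def qvertex_def using ring_tour_nonneg[of "snd v" r] by simp

lemma potential_adj_le:
  assumes "2 \<le> r" "d * r = n" "qadj n d r u v"
  shows "potential d r v \<le> potential d r u + 1"
proof -
  have uv: "fst u \<subseteq> {1..n}" "snd u < r" "snd v < r"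
    using assms(3) unfolding qadj_def qvertex_def by auto
  consider (flip) i where "snd v = snd u" "1 \<le> i" "i \<le> d"
      "fst v = fst u - {idx n (i + d * snd u)} \<union> ({idx n (i + d * snd u)} - fst u)"
    | (ring) "fst v = fst u" "snd v = (snd u + 1) mod r \<or> snd u = (snd v + 1) mod r"
    using assms(3) unfolding qadj_def by auto
  then show ?thesis
  proof cases
    case flip
    define c where "c = i + d * snd u"
    have c: "idx n c = c" "(c - 1) div d = snd u"
      unfolding c_def using flip_coordinate[OF flip(2,3) uv(2) assms(2)] by simp_all
    have fv: "fst v = fst u - {c} \<union> ({c} - fst u)" using flip(4) c unfolding c_def by simp
    have "card (fst v) \<le> card (fst u) + 1"
      using finite_subset[OF uv(1)] unfolding fv
      by (cases "c \<in> fst u") (auto simp: card_insert_if insert_absorb Un_commute card_Diff1_le)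
    then show ?thesis using ring_tour_flip[OF c(2)] flip(1) unfolding potential_def fv by simp
  next
    case ring
    then show ?thesis using ring_tour_neighbour[OF uv(2,3), of "blocks d (fst u)"] assms(1)
      unfolding potential_def by auto
  qed
qed

lemma potential_walk_le:
  assumes "2 \<le> r" "d * r = n"
  shows "qwalk n d r k u v \<Longrightarrow> potential d r v \<le> potential d r u + int k"
proof (induction k arbitrary: u)
  case (Suc k)
  then obtain w where "qadj n d r u w" "qwalk n d r k w v" by auto
  then show ?case using Suc.IH potential_adj_le[OF assms] by fastforce
qed simp

lemma qwalk_snoc: "qwalk n d r k u w \<Longrightarrow> qadj n d r w v \<Longrightarrow> qwalk n d r (Suc k) u v"
proof (induction k arbitrary: u)
  case 0
  have "qvertex n r v" using 0(2) unfolding qadj_def by simp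
  then show ?case using 0 by (cases v) auto
next
  case (Suc k)
  then obtain w' where w': "qadj n d r u w'" "qwalk n d r k w' w" by auto
  then have "qwalk n d r (Suc k) w' v" using Suc.IH Suc.prems(2) by blast
  then show ?case using w'(1) by (meson qwalk.simps(2))
qed

lemma potential_descent_flip:
  assumes "1 \<le> d" "d * r = n" "a \<subseteq> {1..n}" "x < r" "c \<in> a" "(c - 1) div d = x"
  shows "qadj n d r (a - {c}, x) (a, x)" "potential d r (a - {c}, x) = potential d r (a, x) - 1"
proof -
  define i where "i = c - d * x"
  have c: "1 \<le> c" "c \<le> n" using assms(3,5) by auto
  have "c - 1 = d * x + (c - 1) mod d" using assms(6) div_mult_mod_eq[of "c - 1" d] by (simp add: mult.commute)
  moreover have "(c - 1) mod d < d" using assms(1) by simp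
  ultimately have i: "1 \<le> i" "i \<le> d" "i + d * x = c" unfolding i_def using c by linarith+
  have "idx n (i + d * x) = c" using i(3) idx_eq_self[OF c] by simp
  then show "qadj n d r (a - {c}, x) (a, x)"
    unfolding qadj_def qvertex_def using assms(3-5) i by (auto intro!: bexI[of _ i])
  have "a - {c} - {c} \<union> ({c} - (a - {c})) = a" using assms(5) by auto
  then have "ring_tour r (blocks d (a - {c})) x = ring_tour r (blocks d a) x"
    using ring_tour_flip[OF assms(6), of r "a - {c}"] by simp
  moreover have "card (a - {c}) = card a - 1" "card a > 0"
    using assms(3,5) finite_subset[OF assms(3)] by (auto simp: card_gt_0_iff)
  ultimately show "potential d r (a - {c}, x) = potential d r (a, x) - 1"
    unfolding potential_def by simp
qed

lemma potential_descent:
  assumes "1 \<le> d" "2 \<le> r" "d * r = n" "qvertex n r v" "v \<noteq> ({}, 0)"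
  obtains u where "qadj n d r u v" "potential d r u = potential d r v - 1"
proof -
  obtain a x where v: "v = (a, x)" by force
  have a: "a \<subseteq> {1..n}" and x: "x < r" using assms(4) unfolding v qvertex_def by auto
  show ?thesis
  proof (cases "x \<in> blocks d a")
    case True
    then obtain c where "c \<in> a" "(c - 1) div d = x" unfolding blocks_def by auto
    then show ?thesis using potential_descent_flip[OF assms(1,3) a x] that unfolding v by blast
  next
    case False
    have "blocks d a \<noteq> {} \<or> x \<noteq> 0" using assms(5) unfolding v blocks_def by auto
    then obtain y where y: "y < r" "y = (x + 1) mod r \<or> x = (y + 1) mod r"
        "ring_tour r (blocks d a) y = ring_tour r (blocks d a) x - 1"
      using ring_tour_descent[OF x _ False blocks_subset[OF a assms(3,1)]] assms(2) by auto
    then have "qadj n d r (a, y) v" unfolding qadj_def qvertex_def v using a x by auto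
    moreover have "potential d r (a, y) = potential d r v - 1" using y(3) unfolding potential_def v by simp
    ultimately show ?thesis using that by blast
  qed
qed

lemma qwalk_from_start:
  assumes "1 \<le> d" "2 \<le> r" "d * r = n"
  shows "qvertex n r v \<Longrightarrow> potential d r v = int m \<Longrightarrow> qwalk n d r m ({}, 0) v"
proof (induction m arbitrary: v)
  case 0
  show ?case
  proof (cases "v = ({}, 0)")
    case False
    then obtain u where "qadj n d r u v" "potential d r u = potential d r v - 1"
      using potential_descent[OF assms 0(1)] by blast
    moreover have "qvertex n r u" using calculation(1) unfolding qadj_def by simp
    ultimately show ?thesis using potential_nonneg[of n r u d] 0(2) by simp
  qed (use 0 assms(2) in \<open>simp add: qvertex_def\<close>)
next
  case (Suc m)
  then have "v \<noteq> ({}, 0)" using potential_start[of d r] by auto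
  then obtain u where u: "qadj n d r u v" "potential d r u = potential d r v - 1"
    using potential_descent[OF assms Suc.prems(1)] by blast
  then have "qvertex n r u" unfolding qadj_def by simp
  then have "qwalk n d r m ({}, 0) u" using Suc.IH u(2) Suc.prems(2) by simp
  then show ?case using qwalk_snoc u(1) by blast
qed

theorem mainTheorem7:
  fixes n d r x :: nat and a :: "nat set"
  assumes "n \<ge> 2" and "d \<ge> 1" and "r \<ge> 3" and "d * r = n"
    and "a \<subseteq> {1..n}" and "x < r"
  shows "int (qdist n d r ({}, 0) (a, x)) =
           int (card a) + min (int r + int x - 2 * int (leap1 d r a x))
                              (2 * int r - int x - 2 * int (leap2 d r a x))"
proof -
  have r: "2 \<le> r" using assms(3) by simp
  have fin: "finite a" using assms(5) finite_subset by blast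
  have formula: "int (card a) + min (int r + int x - 2 * int (leap1 d r a x))
                       (2 * int r - int x - 2 * int (leap2 d r a x)) = potential d r (a, x)"
    unfolding potential_def ring_tour_def tour_gap_below_def tour_gap_above_def
      leap1_eq_max_gap[OF fin assms(6)]
      leap2_eq_max_gap[OF fin blocks_subset[OF assms(5,4,2)] assms(6)]
    by simp
  have v: "qvertex n r (a, x)" unfolding qvertex_def using assms(5,6) by simp
  define p where "p = nat (potential d r (a, x))"
  have p: "potential d r (a, x) = int p" unfolding p_def using potential_nonneg[OF v] by simp
  have "qwalk n d r p ({}, 0) (a, x)" by (rule qwalk_from_start[OF assms(2) r assms(4) v p])
  moreover have "p \<le> k" if "qwalk n d r k ({}, 0) (a, x)" for k
    using potential_walk_le[OF r assms(4) that] potential_start[of d r] p by simp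
  ultimately have "qdist n d r ({}, 0) (a, x) = p" unfolding qdist_def by (rule Least_equality)
  then show ?thesis using formula p by simp
qed

end
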